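(* For a set $\mathcal{R}$ of languages over $\Sigma$ let $\dot{\overline{\mathcal{R}}}=\{\Sigma^*\setminus L\mid L\in\mathcal{R}\}$ (point-wise complement). (1) There exists a rational set of regular languages $\mathcal{R}$ such that $\dot{\overline{\mathcal{R}}}$ is not a rational set of regular languages. (2) If $\mathcal{R}$ is a finite rational set of regular languages, then $\dot{\overline{\mathcal{R}}}$ is a finite rational set of regular languages. (3) In the finite case a modified language substitution is in general required: there exist an alphabet $\Delta$, a regular language substitution $\varphi:\Delta\to2^{\Sigma^*}$ and a regular $K\subseteq\Delta^+$ with $\mathcal{R}=(K,\varphi)$ finite, such that there is no regular $K'\subseteq\Delta^+$ with $\dot{\overline{\mathcal{R}}}=(K',\varphi)$.
   Context: Alphabets are nonempty finite sets. A regular language substitution $\varphi:\Delta\to2^{\Sigma^*}$ maps each symbol to a regular language over $\Sigma$, extended by $\varphi(\delta w)=\varphi(\delta)\varphi(w)$. A set $\mathcal{R}$ of regular languages over $\Sigma$ is a rational set of regular languages, written $\mathcal{R}=(K,\varphi)$, if there are an alphabet $\Delta$, a regular $K\subseteq\Delta^+$ and a regular language substitution $\varphi$ with $\mathcal{R}=\{\varphi(w)\mid w\in K\}$. *)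

theory Defs
  imports Main
begin

definition conc :: "'a list set \<Rightarrow> 'a list set \<Rightarrow> 'a list set" where
  "conc A B = {u @ v | u v. u \<in> A \<and> v \<in> B}"

inductive regular :: "'a set \<Rightarrow> 'a list set \<Rightarrow> bool" for Sig :: "'a set" where
  reg_empty: "regular Sig {}"
| reg_eps: "regular Sig {[]}"
| reg_letter: "a \<in> Sig \<Longrightarrow> regular Sig {[a]}"
| reg_union: "regular Sig A \<Longrightarrow> regular Sig B \<Longrightarrow> regular Sig (A \<union> B)"
| reg_conc: "regular Sig A \<Longrightarrow> regular Sig B \<Longrightarrow> regular Sig (conc A B)"
| reg_star: "regular Sig A \<Longrightarrow> regular Sig (\<Union>n. ((\<lambda>X. conc A X) ^^ n) {[]})"

fun subst_word :: "('d \<Rightarrow> 'a list set) \<Rightarrow> 'd list \<Rightarrow> 'a list set" where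
  "subst_word phi [] = {[]}"
| "subst_word phi (d # w) = conc (phi d) (subst_word phi w)"

definition alphabet :: "'a set \<Rightarrow> bool" where
  "alphabet A \<longleftrightarrow> finite A \<and> A \<noteq> {}"

definition reg_subst :: "'d set \<Rightarrow> 'a set \<Rightarrow> ('d \<Rightarrow> 'a list set) \<Rightarrow> bool" where
  "reg_subst Del Sig phi \<longleftrightarrow> (\<forall>d\<in>Del. regular Sig (phi d))"

definition rat_of :: "'d list set \<Rightarrow> ('d \<Rightarrow> 'a list set) \<Rightarrow> 'a list set set" where
  "rat_of K phi = subst_word phi ` K"

definition reg_plus :: "'d set \<Rightarrow> 'd list set \<Rightarrow> bool" where
  "reg_plus Del K \<longleftrightarrow> regular Del K \<and> K \<subseteq> lists Del - {[]}"

text \<open>Rational set of regular languages over Sig; the alphabet Del is taken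
  as a finite nonempty set of natural numbers (any finite alphabet can be renamed into one).\<close>

definition rational_set :: "'a set \<Rightarrow> 'a list set set \<Rightarrow> bool" where
  "rational_set Sig R \<longleftrightarrow>
     (\<exists>(Del :: nat set) K phi. alphabet Del \<and> reg_plus Del K \<and>
        reg_subst Del Sig phi \<and> R = rat_of K phi)"

definition pcompl :: "'a set \<Rightarrow> 'a list set set \<Rightarrow> 'a list set set" where
  "pcompl Sig R = (\<lambda>L. lists Sig - L) ` R"

end

theory Submission
  imports Defs
begin

text \<open>Regular languages are closed under complement (via derivatives and Kleene's
  construction), so a finite rational set is complemented by giving each complement its
  own letter. For (1), the point-wise complement of {{a^n} | n \<ge> 1} is an infinite
  antichain of languages containing the empty word. If (K, \<psi>) presents such a set,
  pumping a long word of K down deletes a factor whose image contains the empty word; this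
  can only shrink the image, hence leaves it unchanged. So all values are images of words
  bounded in length by the number of derivatives of K, and there are only finitely many.
  For (3), the substitution sending every letter to {\<epsilon>} takes only the value {\<epsilon>}, while
  the complement of {\<epsilon>} is not {\<epsilon>}.\<close>

definition star :: "'a list set \<Rightarrow> 'a list set" where
  "star A = (\<Union>n. ((\<lambda>X. conc A X) ^^ n) {[]})"

lemma regular_star: "regular Sig A \<Longrightarrow> regular Sig (star A)"
  unfolding star_def by (rule reg_star)

lemma concI: "u \<in> A \<Longrightarrow> v \<in> B \<Longrightarrow> u @ v \<in> conc A B"
  by (auto simp: conc_def)

lemma conc_Nil_left [simp]: "conc {[]} A = A"
  by (auto simp: conc_def)

lemma conc_assoc: "conc (conc A B) C = conc A (conc B C)"
  unfolding conc_def by (auto, metis append.assoc, metis append.assoc)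

lemma conc_mono: "A \<subseteq> A' \<Longrightarrow> B \<subseteq> B' \<Longrightarrow> conc A B \<subseteq> conc A' B'"
  by (auto simp: conc_def)

lemma Nil_in_conc: "[] \<in> conc A B \<longleftrightarrow> [] \<in> A \<and> [] \<in> B"
  by (auto simp: conc_def)

lemma Nil_in_star [simp]: "[] \<in> star A"
  unfolding star_def by (auto intro: exI[of _ 0])

lemma append_in_star: "u \<in> A \<Longrightarrow> v \<in> star A \<Longrightarrow> u @ v \<in> star A"
proof -
  assume "u \<in> A" "v \<in> star A"
  then obtain n where "v \<in> ((\<lambda>X. conc A X) ^^ n) {[]}" unfolding star_def by auto
  then have "u @ v \<in> ((\<lambda>X. conc A X) ^^ Suc n) {[]}" using \<open>u \<in> A\<close> by (auto intro: concI)
  then show ?thesis unfolding star_def by blast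
qed

lemma star_induct [consumes 1, case_names Nil append]:
  assumes "x \<in> star A" and "P []"
    and "\<And>u v. u \<in> A \<Longrightarrow> v \<in> star A \<Longrightarrow> P v \<Longrightarrow> P (u @ v)"
  shows "P x"
proof -
  obtain n where "x \<in> ((\<lambda>X. conc A X) ^^ n) {[]}" using assms(1) unfolding star_def by auto
  then show ?thesis
  proof (induction n arbitrary: x)
    case 0
    then show ?case using assms(2) by simp
  next
    case (Suc n)
    then obtain u v where "x = u @ v" "u \<in> A" "v \<in> ((\<lambda>X. conc A X) ^^ n) {[]}"
      by (auto simp: conc_def)
    moreover have "v \<in> star A" using calculation(3) unfolding star_def by blast
    ultimately show ?case using Suc.IH assms(3) by blast
  qed
qed

lemma star_singleton: "star {[c]} = lists {c}"
proof (rule set_eqI, rule iffI)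
  show "x \<in> lists {c}" if "x \<in> star {[c]}" for x
    using that by (induction rule: star_induct) auto
  show "x \<in> star {[c]}" if "x \<in> lists {c}" for x
    using that by (induction x) (use append_in_star[of "[c]"] in auto)
qed

definition deriv :: "'a list \<Rightarrow> 'a list set \<Rightarrow> 'a list set" where
  "deriv w L = {v. w @ v \<in> L}"

definition derivs :: "'a list set \<Rightarrow> 'a list set set" where
  "derivs L = range (\<lambda>w. deriv w L)"

lemma deriv_Nil [simp]: "deriv [] L = L"
  by (simp add: deriv_def)

lemma deriv_append: "deriv (u @ v) L = deriv v (deriv u L)"
  by (simp add: deriv_def)

lemma deriv_in_derivs: "deriv w L \<in> derivs L"
  by (simp add: derivs_def)

lemma self_in_derivs: "L \<in> derivs L"
  using deriv_in_derivs[of "[]" L] by simp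

lemma derivs_closed_deriv: "X \<in> derivs L \<Longrightarrow> deriv w X \<in> derivs L"
  by (auto simp: derivs_def deriv_append[symmetric])

text \<open>Finiteness of derivs L is proved by exhibiting a finite family that contains L and
  is closed under derivatives by single letters (Brzozowski).\<close>

lemma derivs_subsetI:
  assumes "L \<in> F" and "\<And>X a. X \<in> F \<Longrightarrow> deriv [a] X \<in> F"
  shows "derivs L \<subseteq> F"
proof -
  have "deriv w L \<in> F" for w
    by (induction w rule: rev_induct) (use assms in \<open>auto simp: deriv_append\<close>)
  then show ?thesis by (auto simp: derivs_def)
qed

lemma deriv_union: "deriv w (A \<union> B) = deriv w A \<union> deriv w B"
  by (auto simp: deriv_def)

lemma deriv_Union: "deriv w (\<Union>T) = \<Union> (deriv w ` T)"
  by (auto simp: deriv_def)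

lemma deriv_UN: "deriv w (\<Union>X\<in>T. F X) = (\<Union>X\<in>T. deriv w (F X))"
  by (auto simp: deriv_def)

lemma deriv_conc:
  "deriv [a] (conc A B) = conc (deriv [a] A) B \<union> (if [] \<in> A then deriv [a] B else {})"
  by (auto simp: deriv_def conc_def Cons_eq_append_conv)

lemma deriv_star: "deriv [a] (star A) = conc (deriv [a] A) (star A)"
proof (rule set_eqI, rule iffI)
  have "x \<in> conc (deriv [a] A) (star A)" if "z \<in> star A" "z = a # x" for z x
    using that
  proof (induction arbitrary: x rule: star_induct)
    case (append u v)
    then show ?case by (cases u) (auto simp: deriv_def intro: concI)
  qed simp
  then show "x \<in> conc (deriv [a] A) (star A)" if "x \<in> deriv [a] (star A)" for x
    using that by (simp add: deriv_def)
  show "x \<in> deriv [a] (star A)" if "x \<in> conc (deriv [a] A) (star A)" for x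
    using that append_in_star[of "a # _" A] by (auto simp: deriv_def conc_def)
qed

lemma finite_derivs_union:
  assumes "finite (derivs A)" "finite (derivs B)"
  shows "finite (derivs (A \<union> B))"
proof (rule finite_subset)
  show "derivs (A \<union> B) \<subseteq> (\<lambda>(X, Y). X \<union> Y) ` (derivs A \<times> derivs B)"
    unfolding derivs_def deriv_union by (auto intro: deriv_in_derivs)
  show "finite ((\<lambda>(X, Y). X \<union> Y) ` (derivs A \<times> derivs B))"
    using assms by simp
qed

lemma finite_derivs_conc:
  assumes "finite (derivs A)" "finite (derivs B)"
  shows "finite (derivs (conc A B))"
proof (rule finite_subset)
  let ?F = "(\<lambda>(X, T). conc X B \<union> \<Union>T) ` (derivs A \<times> Pow (derivs B))"
  show "derivs (conc A B) \<subseteq> ?F"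
  proof (rule derivs_subsetI)
    show "conc A B \<in> ?F"
      using self_in_derivs[of A] by (intro image_eqI[where x = "(A, {})"]) auto
    fix Y a assume "Y \<in> ?F"
    then obtain X T where X: "X \<in> derivs A" and T: "T \<subseteq> derivs B" and Y: "Y = conc X B \<union> \<Union>T"
      by auto
    let ?T = "deriv [a] ` T \<union> (if [] \<in> X then {deriv [a] B} else {})"
    have "deriv [a] Y = conc (deriv [a] X) B \<union> \<Union>?T"
      unfolding Y deriv_union deriv_Union deriv_conc by auto
    moreover have "(deriv [a] X, ?T) \<in> derivs A \<times> Pow (derivs B)"
      using X T by (auto simp: deriv_in_derivs intro: derivs_closed_deriv)
    ultimately show "deriv [a] Y \<in> ?F"
      by (intro image_eqI[where x = "(deriv [a] X, ?T)"]) simp_all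
  qed
  show "finite ?F" using assms by simp
qed

lemma finite_derivs_star:
  assumes "finite (derivs A)"
  shows "finite (derivs (star A))"
proof (rule finite_subset)
  let ?F = "insert (star A) ((\<lambda>T. \<Union>X\<in>T. conc X (star A)) ` Pow (derivs A))"
  show "derivs (star A) \<subseteq> ?F"
  proof (rule derivs_subsetI)
    fix Y a assume "Y \<in> ?F"
    then consider "Y = star A" | T where "T \<subseteq> derivs A" "Y = (\<Union>X\<in>T. conc X (star A))"
      by auto
    then show "deriv [a] Y \<in> ?F"
    proof cases
      case 1
      then have "deriv [a] Y = (\<Union>X\<in>{deriv [a] A}. conc X (star A))"
        by (simp add: deriv_star)
      then show ?thesis using deriv_in_derivs[of "[a]" A] by blast
    next
      case (2 T)
      let ?T = "deriv [a] ` T \<union> (if \<exists>X\<in>T. [] \<in> X then {deriv [a] A} else {})"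
      have "deriv [a] Y = (\<Union>X\<in>T. conc (deriv [a] X) (star A) \<union>
          (if [] \<in> X then conc (deriv [a] A) (star A) else {}))"
        unfolding 2 deriv_UN deriv_conc deriv_star ..
      also have "\<dots> = (\<Union>X\<in>?T. conc X (star A))"
        by (auto split: if_splits)
      finally have "deriv [a] Y = (\<Union>X\<in>?T. conc X (star A))" .
      moreover have "?T \<subseteq> derivs A"
        using 2 by (auto simp: deriv_in_derivs intro: derivs_closed_deriv)
      ultimately show ?thesis by blast
    qed
  qed simp
  show "finite ?F" using assms by simp
qed

lemma finite_derivs: "regular Sig L \<Longrightarrow> finite (derivs L)"
proof (induction rule: regular.induct)
  case reg_empty
  have "derivs {} \<subseteq> {{}}" by (auto simp: derivs_def deriv_def)
  then show ?case by (rule finite_subset) simp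
next
  case reg_eps
  have "derivs {[]} \<subseteq> {{}, {[]}}" by (auto simp: derivs_def deriv_def)
  then show ?case by (rule finite_subset) simp
next
  case (reg_letter a)
  have "derivs {[a]} \<subseteq> {{}, {[]}, {[a]}}"
    by (auto simp: derivs_def deriv_def Cons_eq_append_conv append_eq_Cons_conv)
  then show ?case by (rule finite_subset) simp
next
  case (reg_star A)
  then show ?case using finite_derivs_star[of A] unfolding star_def by simp
qed (auto intro: finite_derivs_union finite_derivs_conc)

lemma regular_singletons: "finite B \<Longrightarrow> B \<subseteq> Sig \<Longrightarrow> regular Sig ((\<lambda>a. [a]) ` B)"
  by (induction B rule: finite_induct) (auto intro: reg_empty reg_letter reg_union[of Sig "{[_]}", simplified])

lemma regular_UN: "finite I \<Longrightarrow> (\<And>i. i \<in> I \<Longrightarrow> regular Sig (F i)) \<Longrightarrow> regular Sig (\<Union>i\<in>I. F i)"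
  by (induction I rule: finite_induct) (auto intro: reg_empty reg_union)

text \<open>Kleene's construction: the words leading from p to q under the transition
  function \<delta> whose intermediate states all lie in S.\<close>

definition paths :: "('s \<Rightarrow> 'a \<Rightarrow> 's) \<Rightarrow> 'a set \<Rightarrow> 's set \<Rightarrow> 's \<Rightarrow> 's \<Rightarrow> 'a list set" where
  "paths \<delta> Sig S p q = {w \<in> lists Sig. foldl \<delta> p w = q \<and>
     (\<forall>i. 0 < i \<and> i < length w \<longrightarrow> foldl \<delta> p (take i w) \<in> S)}"

lemma paths_empty:
  "paths \<delta> Sig {} p q = (if p = q then {[]} else {}) \<union> (\<lambda>a. [a]) ` {a \<in> Sig. \<delta> p a = q}"
proof (rule set_eqI, rule iffI)
  fix w assume w: "w \<in> paths \<delta> Sig {} p q"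
  then have "\<not> 1 < length w"
    unfolding paths_def by auto
  then consider "w = []" | a where "w = [a]"
    by (cases w) auto
  then show "w \<in> (if p = q then {[]} else {}) \<union> (\<lambda>a. [a]) ` {a \<in> Sig. \<delta> p a = q}"
    by cases (use w in \<open>auto simp: paths_def\<close>)
qed (auto simp: paths_def split: if_splits)

lemma paths_mono: "S \<subseteq> S' \<Longrightarrow> paths \<delta> Sig S p q \<subseteq> paths \<delta> Sig S' p q"
  by (auto simp: paths_def)

lemma paths_append:
  assumes "u \<in> paths \<delta> Sig S p s" "v \<in> paths \<delta> Sig S s q" "s \<in> S"
  shows "u @ v \<in> paths \<delta> Sig S p q"
proof -
  have "foldl \<delta> p (take i (u @ v)) \<in> S" if "0 < i" "i < length (u @ v)" for i
  proof -
    consider "i < length u" | "i = length u" | "i > length u" by linarith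
    then show ?thesis
    proof cases
      case 3
      then have "take i (u @ v) = u @ take (i - length u) v" by simp
      then show ?thesis using assms that 3 unfolding paths_def by auto
    qed (use assms that in \<open>auto simp: paths_def\<close>)
  qed
  then show ?thesis using assms unfolding paths_def by auto
qed

lemma paths_insert_split:
  assumes "w \<in> paths \<delta> Sig (insert s S) p q" "w \<notin> paths \<delta> Sig S p q"
  obtains i where "0 < i" "i < length w" "take i w \<in> paths \<delta> Sig S p s"
    "drop i w \<in> paths \<delta> Sig (insert s S) s q"
proof -
  have "\<exists>i. 0 < i \<and> i < length w \<and> foldl \<delta> p (take i w) \<notin> S"
    using assms unfolding paths_def by auto
  then obtain i where i: "0 < i" "i < length w" "foldl \<delta> p (take i w) \<notin> S"
    and min: "\<And>j. 0 < j \<Longrightarrow> j < i \<Longrightarrow> foldl \<delta> p (take j w) \<in> S"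
    using exists_least_iff[of "\<lambda>i. 0 < i \<and> i < length w \<and> foldl \<delta> p (take i w) \<notin> S"]
    by (meson less_trans)
  have s: "foldl \<delta> p (take i w) = s" using i assms(1) unfolding paths_def by auto
  have w: "w \<in> lists Sig" "foldl \<delta> p w = q" using assms(1) by (simp_all add: paths_def)
  have "take i w \<in> paths \<delta> Sig S p s"
    unfolding paths_def using s w i min by (auto dest: in_set_takeD)
  moreover have "drop i w \<in> paths \<delta> Sig (insert s S) s q"
  proof -
    have "foldl \<delta> s (take j (drop i w)) \<in> insert s S" if "0 < j" "j < length (drop i w)" for j
    proof -
      have "foldl \<delta> p (take (i + j) w) \<in> insert s S"
        using assms(1) that unfolding paths_def by auto
      then show ?thesis using s by (simp add: take_add)
    qed
    moreover have "foldl \<delta> s (drop i w) = q"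
      using s w(2) foldl_append[of \<delta> p "take i w" "drop i w"] by simp
    ultimately show ?thesis
      using w(1) unfolding paths_def by (auto dest: in_set_dropD)
  qed
  ultimately show thesis using i that by blast
qed

lemma star_paths_subset: "star (paths \<delta> Sig S s s) \<subseteq> paths \<delta> Sig (insert s S) s s"
proof
  fix x assume "x \<in> star (paths \<delta> Sig S s s)"
  then show "x \<in> paths \<delta> Sig (insert s S) s s"
  proof (induction rule: star_induct)
    case Nil
    then show ?case by (simp add: paths_def)
  next
    case (append u v)
    then show ?case
      using paths_mono[of S "insert s S"] paths_append[of u \<delta> Sig "insert s S" s s v s] by blast
  qed
qed

lemma paths_insert_loop:
  "w \<in> paths \<delta> Sig (insert s S) s q \<Longrightarrow> w \<in> conc (star (paths \<delta> Sig S s s)) (paths \<delta> Sig S s q)"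
proof (induction "length w" arbitrary: w rule: less_induct)
  case less
  show ?case
  proof (cases "w \<in> paths \<delta> Sig S s q")
    case True
    then show ?thesis using concI[of "[]" _ w] by simp
  next
    case False
    then obtain i where i: "0 < i" "i < length w" "take i w \<in> paths \<delta> Sig S s s"
      "drop i w \<in> paths \<delta> Sig (insert s S) s q"
      using paths_insert_split[OF less.prems] by blast
    then have "drop i w \<in> conc (star (paths \<delta> Sig S s s)) (paths \<delta> Sig S s q)"
      using less.hyps[of "drop i w"] by simp
    then obtain x y where "drop i w = x @ y" "x \<in> star (paths \<delta> Sig S s s)" "y \<in> paths \<delta> Sig S s q"
      by (auto simp: conc_def)
    moreover have "w = (take i w @ x) @ y"
      using calculation(1) by (metis append.assoc append_take_drop_id)
    ultimately show ?thesis
      using concI[OF append_in_star[OF i(3)]] by metis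
  qed
qed

lemma paths_insert:
  "paths \<delta> Sig (insert s S) p q = paths \<delta> Sig S p q \<union>
     conc (paths \<delta> Sig S p s) (conc (star (paths \<delta> Sig S s s)) (paths \<delta> Sig S s q))"
    (is "?lhs = ?P \<union> conc ?A (conc ?L ?B)")
proof
  show "?lhs \<subseteq> ?P \<union> conc ?A (conc ?L ?B)"
  proof
    fix w assume w: "w \<in> ?lhs"
    show "w \<in> ?P \<union> conc ?A (conc ?L ?B)"
    proof (cases "w \<in> ?P")
      case False
      then obtain i where "take i w \<in> ?A" "drop i w \<in> paths \<delta> Sig (insert s S) s q"
        using paths_insert_split[OF w] by blast
      then have "take i w @ drop i w \<in> conc ?A (conc ?L ?B)"
        by (intro concI paths_insert_loop)
      then show ?thesis by simp
    qed simp
  qed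
  show "?P \<union> conc ?A (conc ?L ?B) \<subseteq> ?lhs"
  proof
    fix w assume "w \<in> ?P \<union> conc ?A (conc ?L ?B)"
    then consider "w \<in> ?P" | u x y where "w = u @ x @ y" "u \<in> ?A" "x \<in> ?L" "y \<in> ?B"
      by (auto simp: conc_def)
    then show "w \<in> ?lhs"
    proof cases
      case 1
      then show ?thesis using paths_mono[of S "insert s S"] by blast
    next
      case (2 u x y)
      have "u \<in> paths \<delta> Sig (insert s S) p s" "y \<in> paths \<delta> Sig (insert s S) s q"
        using 2 paths_mono[of S "insert s S"] by blast+
      moreover have "x \<in> paths \<delta> Sig (insert s S) s s"
        using star_paths_subset 2(3) by (rule subsetD)
      ultimately show ?thesis
        unfolding 2 by (intro paths_append[where s = s]) simp_all
    qed
  qed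
qed

lemma regular_paths:
  assumes "finite Sig" "finite S"
  shows "regular Sig (paths \<delta> Sig S p q)"
  using assms(2)
proof (induction S arbitrary: p q rule: finite_induct)
  case empty
  have "regular Sig ((\<lambda>a. [a]) ` {a \<in> Sig. \<delta> p a = q})"
    using assms(1) by (intro regular_singletons) auto
  then show ?case
    unfolding paths_empty by (intro reg_union) (auto intro: reg_empty reg_eps)
next
  case (insert s S)
  then show ?case
    unfolding paths_insert by (intro reg_union reg_conc regular_star)
qed

text \<open>The complement is recognised by the automaton whose states are the derivatives
  of L; the restriction on intermediate states is then vacuous.\<close>

lemma regular_lists_diff:
  assumes "finite Sig" "regular Sig L"
  shows "regular Sig (lists Sig - L)"
proof -
  let ?\<delta> = "\<lambda>X a. deriv [a] X"
  have run: "foldl ?\<delta> X w = deriv w X" for X w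
    by (induction w arbitrary: X) (simp_all add: deriv_append[symmetric])
  have paths: "w \<in> paths ?\<delta> Sig (derivs L) L q \<longleftrightarrow> w \<in> lists Sig \<and> deriv w L = q" for w q
    by (auto simp: paths_def run deriv_in_derivs)
  have "lists Sig - L = (\<Union>q\<in>{Y \<in> derivs L. [] \<notin> Y}. paths ?\<delta> Sig (derivs L) L q)"
    by (auto simp: paths deriv_in_derivs) (auto simp: deriv_def)
  moreover have "regular Sig \<dots>"
    using finite_derivs[OF assms(2)] assms(1) by (intro regular_UN regular_paths) auto
  ultimately show ?thesis by simp
qed

lemma subst_word_append: "subst_word phi (u @ v) = conc (subst_word phi u) (subst_word phi v)"
  by (induction u) (simp_all add: conc_assoc)

lemma regular_subst_word: "reg_subst Del Sig phi \<Longrightarrow> w \<in> lists Del \<Longrightarrow> regular Sig (subst_word phi w)"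
  by (induction w) (auto simp: reg_subst_def intro: reg_eps reg_conc)

lemma subst_word_const_singleton: "subst_word (\<lambda>_. {[a]}) w = {replicate (length w) a}"
  by (induction w) (auto simp: conc_def)

lemma subst_word_const_Nil: "subst_word (\<lambda>_. {[]}) w = {[]}"
  by (induction w) simp_all

lemma regular_pump_down:
  assumes "regular Sig K" "w \<in> K" "card (derivs K) < length w"
  obtains x y z where "w = x @ y @ z" "y \<noteq> []" "x @ z \<in> K"
proof -
  let ?N = "card (derivs K)"
  let ?f = "\<lambda>i. deriv (take i w) K"
  \<comment> \<open>pigeonhole: two of the first ?N + 1 prefixes of w have the same derivative\<close>
  have "\<not> inj_on ?f {..?N}"
  proof
    assume "inj_on ?f {..?N}"
    moreover have "?f ` {..?N} \<subseteq> derivs K" by (auto simp: deriv_in_derivs)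
    ultimately have "card {..?N} \<le> ?N"
      using card_inj_on_le finite_derivs[OF assms(1)] by blast
    then show False by simp
  qed
  then obtain i j where ij: "i < j" "j \<le> ?N" "?f i = ?f j"
    unfolding inj_on_def by (metis atMost_iff linorder_neqE_nat)
  define y where "y = take (j - i) (drop i w)"
  have w: "w = take i w @ y @ drop j w"
    unfolding y_def using ij(1)
    by (metis append_take_drop_id drop_drop le_add_diff_inverse2 less_imp_le)
  have "drop j w \<in> ?f j" using assms(2) by (simp add: deriv_def)
  then have "drop j w \<in> ?f i" using ij(3) by simp
  then have "take i w @ drop j w \<in> K" by (simp add: deriv_def)
  moreover have "y \<noteq> []" using ij assms(3) by (simp add: y_def)
  ultimately show thesis using that w by blast
qed

lemma rat_of_antichain_short_words:
  assumes K: "regular Del K"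
    and Nil: "\<And>w. w \<in> K \<Longrightarrow> [] \<in> subst_word psi w"
    and antichain: "\<And>w w'. w \<in> K \<Longrightarrow> w' \<in> K \<Longrightarrow>
      subst_word psi w' \<subseteq> subst_word psi w \<Longrightarrow> subst_word psi w' = subst_word psi w"
  shows "rat_of K psi = subst_word psi ` {w \<in> K. length w \<le> card (derivs K)}"
proof
  show "rat_of K psi \<subseteq> subst_word psi ` {w \<in> K. length w \<le> card (derivs K)}"
  proof
    fix M assume "M \<in> rat_of K psi"
    then obtain w where "w \<in> K" "M = subst_word psi w" by (auto simp: rat_of_def)
    then show "M \<in> subst_word psi ` {w \<in> K. length w \<le> card (derivs K)}"
    proof (induction "length w" arbitrary: w rule: less_induct)
      case less
      show ?case
      proof (cases "length w \<le> card (derivs K)")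
        case True
        then show ?thesis using less.prems by blast
      next
        case False
        then have "card (derivs K) < length w" by simp
        with K less.prems(1) obtain x y z where xyz: "w = x @ y @ z" "y \<noteq> []" "x @ z \<in> K"
          by (rule regular_pump_down)
        have "[] \<in> subst_word psi y"
          using Nil[OF less.prems(1)] unfolding xyz(1) subst_word_append Nil_in_conc by blast
        then have "subst_word psi z \<subseteq> conc (subst_word psi y) (subst_word psi z)"
          using concI[of "[]" "subst_word psi y"] by fastforce
        then have "subst_word psi (x @ z) \<subseteq> subst_word psi w"
          unfolding xyz(1) subst_word_append by (intro conc_mono) auto
        then have "M = subst_word psi (x @ z)"
          using antichain[OF less.prems(1) xyz(3)] less.prems(2) by simp
        moreover have "length (x @ z) < length w"
          using xyz(1,2) by simp
        ultimately show ?thesis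
          using less.hyps[OF _ xyz(3)] by blast
      qed
    qed
  qed
qed (auto simp: rat_of_def)

lemma finite_rational_antichain:
  assumes "rational_set Sig R" "\<And>M. M \<in> R \<Longrightarrow> [] \<in> M"
    and "\<And>M M'. M \<in> R \<Longrightarrow> M' \<in> R \<Longrightarrow> M' \<subseteq> M \<Longrightarrow> M' = M"
  shows "finite R"
proof -
  obtain Del :: "nat set" and K psi where "alphabet Del" "reg_plus Del K" and R: "R = rat_of K psi"
    using assms(1) unfolding rational_set_def by blast
  then have K: "regular Del K" "K \<subseteq> lists Del" "finite Del"
    by (auto simp: reg_plus_def alphabet_def)
  have "R = subst_word psi ` {w \<in> K. length w \<le> card (derivs K)}"
  proof (unfold R, rule rat_of_antichain_short_words[OF K(1)])
    show "[] \<in> subst_word psi w" if "w \<in> K" for w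
      using assms(2) that by (simp add: R rat_of_def)
    show "subst_word psi w' = subst_word psi w"
      if "w \<in> K" "w' \<in> K" "subst_word psi w' \<subseteq> subst_word psi w" for w w'
      using assms(3) that by (simp add: R rat_of_def)
  qed
  also have "\<dots> \<subseteq> subst_word psi ` {w. set w \<subseteq> Del \<and> length w \<le> card (derivs K)}"
    using K(2) by blast
  finally show ?thesis
    using finite_lists_length_le[OF K(3)] finite_subset by blast
qed

lemma rational_set_singleton_powers:
  assumes "a \<in> Sig"
  shows "rational_set Sig (rat_of (lists {0::nat} - {[]}) (\<lambda>_. {[a]}))"
  unfolding rational_set_def
proof (intro exI conjI)
  have "lists {0::nat} - {[]} = conc {[0]} (star {[0]})"
    by (auto simp: conc_def star_singleton Cons_in_lists_iff neq_Nil_conv)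
  then have "regular {0::nat} (lists {0} - {[]})"
    by (simp add: reg_conc reg_letter regular_star)
  then show "reg_plus {0::nat} (lists {0} - {[]})"
    by (auto simp: reg_plus_def)
qed (use assms in \<open>auto simp: alphabet_def reg_subst_def intro: reg_letter\<close>)

lemma pcompl_singleton_powers:
  "pcompl Sig (rat_of (lists {0::nat} - {[]}) (\<lambda>_. {[a]})) =
     range (\<lambda>n. lists Sig - {replicate (Suc n) a})"
proof -
  have "length ` (lists {0::nat} - {[]}) = range Suc"
  proof (intro set_eqI iffI)
    fix n assume "n \<in> range Suc"
    then show "n \<in> length ` (lists {0::nat} - {[]})"
      by (intro image_eqI[where x = "replicate n 0"]) auto
  next
    fix n assume "n \<in> length ` (lists {0::nat} - {[]})"
    then obtain x :: "nat list" where "n = length x" "x \<noteq> []" by blast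
    then show "n \<in> range Suc" by (metis Suc_pred length_greater_0_conv rangeI)
  qed
  then show ?thesis
    unfolding pcompl_def rat_of_def image_image subst_word_const_singleton
    by (simp add: image_image[of "\<lambda>n. lists Sig - {replicate n a}" length, symmetric] image_image)
qed

lemma ex_rational_set_pcompl_not_rational:
  assumes "alphabet Sig"
  shows "\<exists>R. rational_set Sig R \<and> \<not> rational_set Sig (pcompl Sig R)"
proof -
  obtain a where a: "a \<in> Sig" using assms unfolding alphabet_def by blast
  define M where "M n = lists Sig - {replicate (Suc n) a}" for n
  have M_antichain: "m = n" if "M m \<subseteq> M n" for m n
  proof -
    have "replicate (Suc n) a \<in> lists Sig" using a by auto
    then have "replicate (Suc n) a = replicate (Suc m) a" using that unfolding M_def by blast
    then show "m = n" by (metis Suc_inject length_replicate)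
  qed
  have "\<not> rational_set Sig (range M)"
  proof
    assume "rational_set Sig (range M)"
    then have "finite (range M)"
    proof (rule finite_rational_antichain)
      show "M' = M''" if "M'' \<in> range M" "M' \<in> range M" "M' \<subseteq> M''" for M' M''
        using that M_antichain by blast
    qed (auto simp: M_def)
    moreover have "inj M"
      by (rule injI) (use M_antichain in blast)
    ultimately show False
      using finite_imageD by blast
  qed
  moreover have "pcompl Sig (rat_of (lists {0::nat} - {[]}) (\<lambda>_. {[a]})) = range M"
    unfolding M_def by (rule pcompl_singleton_powers)
  ultimately show ?thesis
    using rational_set_singleton_powers[OF a] by auto
qed

lemma rational_set_pcompl_finite:
  assumes Sig: "alphabet Sig" and R: "rational_set Sig R" and fin: "finite R"
  shows "rational_set Sig (pcompl Sig R) \<and> finite (pcompl Sig R)"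
proof -
  obtain Del :: "nat set" and K phi where K: "reg_plus Del K" and phi: "reg_subst Del Sig phi"
    and RK: "R = rat_of K phi" using R unfolding rational_set_def by blast
  have fin_pcompl: "finite (pcompl Sig R)" using fin unfolding pcompl_def by simp
  have regular_pcompl: "regular Sig M" if M: "M \<in> pcompl Sig R" for M
  proof -
    obtain w where "w \<in> K" "M = lists Sig - subst_word phi w"
      using M unfolding pcompl_def RK rat_of_def by blast
    moreover have "w \<in> lists Del" using \<open>w \<in> K\<close> K by (auto simp: reg_plus_def)
    ultimately show ?thesis
      using regular_lists_diff regular_subst_word[OF phi] Sig by (auto simp: alphabet_def)
  qed
  obtain k and f :: "nat \<Rightarrow> 'a list set" where f: "pcompl Sig R = f ` {..<k}"
    using finite_imp_nat_seg_image_inj_on[OF fin_pcompl] by (metis lessThan_def)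
  define phi' where "phi' i = (if i < k then f i else {})" for i
  have "regular {..k} ((\<lambda>i. [i]) ` {..<k})"
    by (rule regular_singletons) auto
  then have "alphabet {..k}" "reg_plus {..k} ((\<lambda>i. [i]) ` {..<k})"
    by (auto simp: alphabet_def reg_plus_def)
  moreover have "reg_subst {..k} Sig phi'"
    unfolding reg_subst_def phi'_def using regular_pcompl f by (auto intro: reg_empty)
  moreover have "pcompl Sig R = rat_of ((\<lambda>i. [i]) ` {..<k}) phi'"
    unfolding f rat_of_def phi'_def by (simp add: image_image conc_def)
  ultimately show ?thesis
    using fin_pcompl unfolding rational_set_def by blast
qed

lemma ex_finite_rat_of_pcompl_not_rat_of:
  shows "\<exists>(Del :: nat set) phi K.
           alphabet Del \<and> reg_subst Del Sig phi \<and> reg_plus Del K \<and>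
           finite (rat_of K phi) \<and>
           \<not> (\<exists>K'. reg_plus Del K' \<and> pcompl Sig (rat_of K phi) = rat_of K' phi)"
proof -
  let ?phi = "\<lambda>_ :: nat. {[]} :: 'a list set"
  have "regular {0::nat} {[0]}" by (rule reg_letter) simp
  then have "alphabet {0::nat}" "reg_subst {0::nat} Sig ?phi" "reg_plus {0::nat} {[0]}"
    "finite (rat_of {[0::nat]} ?phi)"
    by (simp_all add: alphabet_def reg_subst_def reg_plus_def rat_of_def reg_eps)
  moreover have "\<not> (\<exists>K'. reg_plus {0::nat} K' \<and> pcompl Sig (rat_of {[0]} ?phi) = rat_of K' ?phi)"
  proof
    assume "\<exists>K'. reg_plus {0::nat} K' \<and> pcompl Sig (rat_of {[0]} ?phi) = rat_of K' ?phi"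
    then obtain K' where "pcompl Sig (rat_of {[0]} ?phi) = rat_of K' ?phi" by blast
    moreover have "pcompl Sig (rat_of {[0]} ?phi) = {lists Sig - {[]}}"
      by (simp add: pcompl_def rat_of_def)
    ultimately have "lists Sig - {[]} \<in> subst_word ?phi ` K'"
      by (simp add: rat_of_def)
    then show False by (auto simp: subst_word_const_Nil)
  qed
  ultimately show ?thesis by blast
qed

theorem proposition4:
  fixes Sig :: "'a set"
  assumes "alphabet Sig"
  shows "(\<exists>R. rational_set Sig R \<and> \<not> rational_set Sig (pcompl Sig R))
    \<and> (\<forall>R. rational_set Sig R \<and> finite R \<longrightarrow>
           rational_set Sig (pcompl Sig R) \<and> finite (pcompl Sig R))
    \<and> (\<exists>(Del :: nat set) phi K.
           alphabet Del \<and> reg_subst Del Sig phi \<and> reg_plus Del K \<and>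
           finite (rat_of K phi) \<and>
           \<not> (\<exists>K'. reg_plus Del K' \<and> pcompl Sig (rat_of K phi) = rat_of K' phi))"
  using ex_rational_set_pcompl_not_rational[OF assms] rational_set_pcompl_finite[OF assms]
    ex_finite_rat_of_pcompl_not_rat_of
  by blast

end
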